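(* Let $d\ge1$ be an integer, let $\mathbf X=(X_1,\dots,X_d)$ be any random vector in $\mathbb R^d$ and let $\mathbf G=(G_1,\dots,G_d)$ be a Gaussian random vector with identity covariance matrix. Then $$d_{\mathrm K}(\mathbf X,\mathbf G)\le 3\log^{1/4}(d+1)\sqrt{W_1(\mathbf X,\mathbf G)}.$$
   Context: The Kolmogorov distance is $d_{\mathrm K}(\mathbf X,\mathbf G)=\sup|\mathbb P[\mathbf X\in Q]-\mathbb P[\mathbf G\in Q]|$, the supremum over all sets $Q=(-\infty,a_1]\times\dots\times(-\infty,a_d]$ with $a_i\in\mathbb R$. The $1$-Wasserstein distance is $W_1(\mathbf X,\mathbf G)=\inf\mathbb E\|\mathbf U-\mathbf V\|$, the infimum over all couplings $(\mathbf U,\mathbf V)$ with $\mathbf U\overset{law}{=}\mathbf X$, $\mathbf V\overset{law}{=}\mathbf G$, where $\|\cdot\|$ is the Euclidean norm (it may equal $+\infty$). *)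

theory Defs
  imports "HOL-Probability.Probability"
begin

definition lower_orthant :: "real^'n \<Rightarrow> (real^'n) set" where
  "lower_orthant a = {x. \<forall>i. x $ i \<le> a $ i}"

definition kolmogorov_dist :: "(real^'n) measure \<Rightarrow> (real^'n) measure \<Rightarrow> real" where
  "kolmogorov_dist P Q =
     (SUP a. \<bar>measure P (lower_orthant a) - measure Q (lower_orthant a)\<bar>)"

definition couplings :: "(real^'n) measure \<Rightarrow> (real^'n) measure \<Rightarrow> ((real^'n) \<times> (real^'n)) measure set" where
  "couplings P Q = {C. prob_space C \<and> sets C = sets borel \<and>
                       distr C borel fst = P \<and> distr C borel snd = Q}"

definition wasserstein1 :: "(real^'n) measure \<Rightarrow> (real^'n) measure \<Rightarrow> ennreal" where
  "wasserstein1 P Q = (INF C \<in> couplings P Q. \<integral>\<^sup>+ z. ennreal (norm (fst z - snd z)) \<partial>C)"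

definition gaussian_id_cov :: "real^'n \<Rightarrow> (real^'n) measure" where
  "gaussian_id_cov mu = density lborel
     (\<lambda>x. ennreal ((2 * pi) powr (- real CARD('n) / 2) * exp (- (norm (x - mu))\<^sup>2 / 2)))"

end

theory Submission
  imports Defs "HOL-Real_Asymp.Real_Asymp"
begin

text \<open>Under a coupling of \<open>X\<close> and \<open>G\<close> with transport cost \<open>W\<close>, Markov's inequality gives
  \<open>\<parallel>X - G\<parallel> \<le> \<epsilon>\<close> outside an event of probability \<open>W / \<epsilon>\<close>, so every orthant probability of \<open>X\<close>
  lies between those of \<open>G\<close> for the orthants shifted by \<open>\<plusminus>\<epsilon>\<close>, up to \<open>W / \<epsilon>\<close>.
  A Gaussian orthant probability is a product of normal distribution functions \<open>\<Phi>\<close>; its growth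
  rate under a diagonal shift is at most \<open>H(t) + d \<phi>(t)\<close> for every \<open>t \<ge> 0\<close>, where
  \<open>H(t) = (t + \<surd>(t\<^sup>2 + 4)) / 2\<close>, by splitting the coordinates at level \<open>t\<close> and using
  the Mills ratio bound \<open>\<phi>(b) \<le> H(t) (1 - \<Phi>(b))\<close> for \<open>b < t\<close>. With \<open>t = \<surd>(2 log (d + 1))\<close> this is \<open>K \<le> 9/4 \<surd>log (d + 1)\<close>, and
  optimising \<open>K \<epsilon> + W / \<epsilon>\<close> over \<open>\<epsilon>\<close> gives \<open>2 \<surd>(K W) \<le> 3 log\<^sup>1\<^sup>/\<^sup>4 (d + 1) \<surd>W\<close>.\<close>

definition std_normal_cdf :: "real \<Rightarrow> real" where
  "std_normal_cdf x = (LBINT y=-\<infinity>..ereal x. std_normal_density y)"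

lemma continuous_on_std_normal_density: "continuous_on S std_normal_density"
  unfolding normal_density_def by (intro continuous_intros) auto

lemma integrable_indicator_std_normal_density:
  "A \<in> sets borel \<Longrightarrow> integrable lborel (\<lambda>y. indicator A y * std_normal_density y)"
  using integrable_mult_indicator[of A lborel std_normal_density] by simp

lemma std_normal_cdf_nonneg: "0 \<le> std_normal_cdf x"
proof -
  have "einterval (-\<infinity>) (ereal x) = {..<x}" by (auto simp: einterval_def)
  then show ?thesis
    unfolding std_normal_cdf_def interval_lebesgue_integral_def set_lebesgue_integral_def
    by (auto intro!: integral_nonneg_AE)
qed

lemma nn_integral_std_normal_density_lessThan:
  "(\<integral>\<^sup>+y. ennreal (std_normal_density y) * indicator {..<x} y \<partial>lborel) = ennreal (std_normal_cdf x)"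
proof -
  have "einterval (-\<infinity>) (ereal x) = {..<x}" by (auto simp: einterval_def)
  then have "std_normal_cdf x = (\<integral>y. indicator {..<x} y * std_normal_density y \<partial>lborel)"
    unfolding std_normal_cdf_def interval_lebesgue_integral_def set_lebesgue_integral_def by simp
  moreover have "(\<integral>\<^sup>+y. ennreal (std_normal_density y) * indicator {..<x} y \<partial>lborel)
      = (\<integral>\<^sup>+y. ennreal (indicator {..<x} y * std_normal_density y) \<partial>lborel)"
    by (intro nn_integral_cong) (auto split: split_indicator)
  ultimately show ?thesis
    by (simp add: nn_integral_eq_integral integrable_indicator_std_normal_density)
qed

lemma nn_integral_std_normal_density_atMost:
  "(\<integral>\<^sup>+y. ennreal (std_normal_density y) * indicator {..x} y \<partial>lborel) = ennreal (std_normal_cdf x)"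
proof -
  have "AE y in lborel. ennreal (std_normal_density y) * indicator {..x} y
                      = ennreal (std_normal_density y) * indicator {..<x} y"
    using AE_lborel_singleton[of x] by eventually_elim (auto split: split_indicator)
  then show ?thesis
    by (simp add: nn_integral_cong_AE nn_integral_std_normal_density_lessThan)
qed

lemma nn_integral_std_normal_density: "(\<integral>\<^sup>+y. ennreal (std_normal_density y) \<partial>lborel) = 1"
proof -
  have "emeasure (density lborel std_normal_density) UNIV = 1"
    using prob_space.emeasure_space_1[OF prob_space_normal_density] by simp
  then show ?thesis by (simp add: emeasure_density)
qed

lemma std_normal_cdf_le_1: "std_normal_cdf x \<le> 1"
proof -
  have "ennreal (std_normal_cdf x) \<le> (\<integral>\<^sup>+y. ennreal (std_normal_density y) \<partial>lborel)"
    unfolding nn_integral_std_normal_density_lessThan[symmetric]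
    by (intro nn_integral_mono) (auto split: split_indicator)
  then show ?thesis by (simp add: nn_integral_std_normal_density)
qed

lemma nn_integral_std_normal_density_atLeast:
  "(\<integral>\<^sup>+y. ennreal (std_normal_density y) * indicator {x..} y \<partial>lborel) = ennreal (1 - std_normal_cdf x)"
proof -
  have "ennreal (std_normal_cdf x) + (\<integral>\<^sup>+y. ennreal (std_normal_density y) * indicator {x..} y \<partial>lborel)
      = (\<integral>\<^sup>+y. ennreal (std_normal_density y) \<partial>lborel)"
    unfolding nn_integral_std_normal_density_lessThan[symmetric]
    by (subst nn_integral_add[symmetric]) (auto intro!: nn_integral_cong split: split_indicator)
  also have "\<dots> = ennreal (std_normal_cdf x) + ennreal (1 - std_normal_cdf x)"
    using std_normal_cdf_nonneg[of x] std_normal_cdf_le_1[of x]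
    by (simp add: nn_integral_std_normal_density flip: ennreal_plus)
  finally show ?thesis by (simp add: ennreal_add_left_cancel)
qed

lemma std_normal_cdf_has_field_derivative:
  "(std_normal_cdf has_field_derivative std_normal_density x) (at x)"
proof -
  define a b where "a = min 0 x - 1" and "b = max 0 x + 1"
  have integrable: "interval_lebesgue_integrable lborel u v std_normal_density" for u v
    unfolding interval_lebesgue_integrable_def set_integrable_def
    by (auto intro!: integrable_indicator_std_normal_density)
  have split: "std_normal_cdf u = std_normal_cdf 0 + (LBINT y=0..u. std_normal_density y)" for u
    unfolding std_normal_cdf_def
    by (subst interval_integral_sum[symmetric, of "-\<infinity>" "ereal 0" "ereal u"])
       (auto simp: integrable zero_ereal_def)
  have "((\<lambda>u. LBINT y=0..u. std_normal_density y) has_vector_derivative std_normal_density x)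
          (at x within {a..b})"
    using interval_integral_FTC2[of a 0 b std_normal_density x]
    by (auto simp: a_def b_def continuous_on_std_normal_density zero_ereal_def)
  then have "((\<lambda>u. LBINT y=0..u. std_normal_density y) has_vector_derivative std_normal_density x) (at x)"
    by (subst (asm) at_within_Icc_at) (auto simp: a_def b_def)
  then have "((\<lambda>u. std_normal_cdf 0 + (LBINT y=0..u. std_normal_density y))
               has_field_derivative std_normal_density x) (at x)"
    by (auto simp: has_real_derivative_iff_has_vector_derivative intro!: derivative_eq_intros)
  then show ?thesis
    unfolding split[symmetric] .
qed

lemma std_normal_cdf_mono: "a \<le> b \<Longrightarrow> std_normal_cdf a \<le> std_normal_cdf b"
  by (rule DERIV_nonneg_imp_nondecreasing[of a b]) (auto intro: std_normal_cdf_has_field_derivative)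

lemma std_normal_density_has_real_derivative:
  "(std_normal_density has_real_derivative (- x * std_normal_density x)) (at x)"
  unfolding std_normal_density_def
  by (auto intro!: derivative_eq_intros simp: power2_eq_square field_simps)

lemma std_normal_density_antimono: "0 \<le> s \<Longrightarrow> s \<le> x \<Longrightarrow> std_normal_density x \<le> std_normal_density s"
  unfolding std_normal_density_def by (auto intro!: divide_right_mono power_mono)

lemma std_normal_density_le_at_0: "std_normal_density x \<le> std_normal_density 0"
  unfolding std_normal_density_def by (simp add: divide_right_mono)

lemma std_normal_density_0: "std_normal_density 0 = 1 / sqrt (2 * pi)"
  unfolding std_normal_density_def by simp

lemma std_normal_density_le_tail:
  fixes b c :: real
  assumes c: "0 < c" and b: "0 \<le> b" and bc: "1 \<le> c * b + c\<^sup>2"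
  shows "std_normal_density b \<le> (b + c) * (1 - std_normal_cdf b)"
proof -
  \<comment> \<open>\<open>-\<phi>(x)/(x+c)\<close> is a primitive of \<open>\<phi>(x) (x(x+c)+1)/(x+c)\<^sup>2\<close>, which is at most \<open>\<phi>(x)\<close> for \<open>x \<ge> b\<close>.\<close>
  define F where "F x = - std_normal_density x / (x + c)" for x
  define f where "f x = std_normal_density x * (x * (x + c) + 1) / (x + c)\<^sup>2" for x
  have F_deriv: "DERIV F x :> f x" if "b \<le> x" for x
  proof -
    have "x + c \<noteq> 0" using that b c by linarith
    have "DERIV F x :> (std_normal_density x + x * std_normal_density x * (x + c)) / (x + c)\<^sup>2"
      unfolding F_def power2_eq_square using \<open>x + c \<noteq> 0\<close>
      by (auto intro!: derivative_eq_intros std_normal_density_has_real_derivative[THEN DERIV_chain2]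
               simp: diff_divide_distrib add_divide_distrib)
    moreover have "(std_normal_density x + x * std_normal_density x * (x + c)) / (x + c)\<^sup>2 = f x"
      unfolding f_def by (simp add: algebra_simps)
    ultimately show ?thesis by simp

  qed
  have f_nonneg: "0 \<le> f x" if "b \<le> x" for x
    using that b c unfolding f_def by (intro divide_nonneg_nonneg mult_nonneg_nonneg) auto
  have f_le: "f x \<le> std_normal_density x" if "b \<le> x" for x
  proof -
    have "c * b \<le> c * x" using that c by simp
    then have "x * (x + c) + 1 \<le> (x + c)\<^sup>2" using bc by (simp add: power2_eq_square algebra_simps)
    moreover have "0 < x + c" using that b c by linarith
    ultimately show ?thesis
      unfolding f_def by (simp add: divide_le_eq mult_left_mono)
  qed
  have "(F \<longlongrightarrow> 0) at_top"
    unfolding F_def std_normal_density_def by real_asymp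
  moreover have "f \<in> borel_measurable borel"
    unfolding f_def std_normal_density_def by measurable
  ultimately have "(\<integral>\<^sup>+x. ennreal (f x) * indicator {b..} x \<partial>lborel) = 0 - F b"
    using F_deriv f_nonneg by (intro nn_integral_FTC_atLeast) auto
  then have "ennreal (std_normal_density b / (b + c)) = (\<integral>\<^sup>+x. ennreal (f x) * indicator {b..} x \<partial>lborel)"
    by (simp add: F_def)
  also have "\<dots> \<le> (\<integral>\<^sup>+x. ennreal (std_normal_density x) * indicator {b..} x \<partial>lborel)"
    by (intro nn_integral_mono) (auto split: split_indicator intro: f_le)
  also have "\<dots> = ennreal (1 - std_normal_cdf b)"
    by (rule nn_integral_std_normal_density_atLeast)
  finally have "std_normal_density b / (b + c) \<le> 1 - std_normal_cdf b"
    using std_normal_cdf_le_1[of b] by (simp add: ennreal_le_iff)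
  then show ?thesis using b c by (simp add: field_simps)
qed

text \<open>\<open>mills_bound b = b + c\<close> where \<open>c > 0\<close> solves \<open>c b + c\<^sup>2 = 1\<close>.\<close>

definition mills_bound :: "real \<Rightarrow> real" where
  "mills_bound t = (t + sqrt (t\<^sup>2 + 4)) / 2"

lemma mills_bound_mono: "0 \<le> s \<Longrightarrow> s \<le> t \<Longrightarrow> mills_bound s \<le> mills_bound t"
  unfolding mills_bound_def by (auto intro!: divide_right_mono add_mono power_mono)

lemma mills_bound_ge_1: "0 \<le> t \<Longrightarrow> 1 \<le> mills_bound t"
  using real_le_rsqrt[of 2 "t\<^sup>2 + 4"] unfolding mills_bound_def by simp

lemma mills_bound_0: "mills_bound 0 = 1"
  using real_sqrt_abs[of 2] unfolding mills_bound_def by simp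

lemma mills_bound_le:
  assumes "0 < t"
  shows "mills_bound t \<le> t + 1 / t"
proof -
  have "sqrt (t\<^sup>2 + 4) \<le> t + 2 / t"
    using assms by (intro real_le_lsqrt) (auto simp: power2_eq_square field_simps)
  then show ?thesis unfolding mills_bound_def by simp
qed

lemma std_normal_density_le_mills_bound:
  assumes t: "0 \<le> t" and bt: "b < t"
  shows "std_normal_density b \<le> mills_bound t * (1 - std_normal_cdf b)"
proof (cases "0 \<le> b")
  case True
  define c where "c = (sqrt (b\<^sup>2 + 4) - b) / 2"
  have "b < sqrt (b\<^sup>2 + 4)"
    using real_sqrt_less_mono[of "b\<^sup>2" "b\<^sup>2 + 4"] True by simp
  then have "0 < c" by (simp add: c_def)
  moreover have "c * b + c\<^sup>2 = 1"
    unfolding c_def power2_eq_square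
    using real_sqrt_mult_self[of "b * b + 4"] by (simp add: field_simps power2_eq_square)
  ultimately have "std_normal_density b \<le> (b + c) * (1 - std_normal_cdf b)"
    using True by (intro std_normal_density_le_tail) auto
  also have "b + c = mills_bound b" by (simp add: c_def mills_bound_def field_simps)
  also have "mills_bound b * (1 - std_normal_cdf b) \<le> mills_bound t * (1 - std_normal_cdf b)"
    using mills_bound_mono[of b t] True bt std_normal_cdf_le_1[of b] by (intro mult_right_mono) auto
  finally show ?thesis .
next
  case False
  have "std_normal_density 0 \<le> (0 + 1) * (1 - std_normal_cdf 0)"
    by (rule std_normal_density_le_tail) auto
  then have "std_normal_density b \<le> 1 - std_normal_cdf b"
    using std_normal_density_le_at_0[of b] std_normal_cdf_mono[of b 0] False by simp
  also have "\<dots> \<le> mills_bound t * (1 - std_normal_cdf b)"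
    using mills_bound_ge_1[OF t] std_normal_cdf_le_1[of b] by (simp add: mult_le_cancel_right1)
  finally show ?thesis .
qed

text \<open>For independent events of probabilities \<open>x i\<close>, the sum is the probability that exactly one
  of them fails.\<close>

lemma sum_one_minus_mult_prod_le_1:
  fixes x :: "'a \<Rightarrow> real"
  assumes "finite B" "\<And>i. i \<in> B \<Longrightarrow> 0 \<le> x i \<and> x i \<le> 1"
  shows "(\<Sum>i\<in>B. (1 - x i) * (\<Prod>j\<in>B-{i}. x j)) \<le> 1"
  using assms
proof (induction B rule: finite_induct)
  case empty
  then show ?case by simp
next
  case (insert k S)
  have xk: "0 \<le> x k" "x k \<le> 1" using insert.prems by auto
  have IH: "(\<Sum>i\<in>S. (1 - x i) * (\<Prod>j\<in>S-{i}. x j)) \<le> 1"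
    using insert.IH insert.prems by auto
  have P: "(\<Prod>j\<in>S. x j) \<le> 1" "0 \<le> (\<Prod>j\<in>S. x j)"
    using insert.prems by (auto intro!: prod_le_1 prod_nonneg)
  have "insert k S - {i} = insert k (S - {i})" if "i \<in> S" for i
    using insert.hyps that by auto
  then have "(\<Sum>i\<in>S. (1 - x i) * (\<Prod>j\<in>insert k S-{i}. x j))
      = x k * (\<Sum>i\<in>S. (1 - x i) * (\<Prod>j\<in>S-{i}. x j))"
    unfolding sum_distrib_left using insert.hyps by (intro sum.cong) auto
  then have "(\<Sum>i\<in>insert k S. (1 - x i) * (\<Prod>j\<in>insert k S-{i}. x j))
      = (1 - x k) * (\<Prod>j\<in>S. x j) + x k * (\<Sum>i\<in>S. (1 - x i) * (\<Prod>j\<in>S-{i}. x j))"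
    using insert.hyps by simp
  also have "\<dots> \<le> (1 - x k) * 1 + x k * 1"
    using xk P IH by (intro add_mono mult_left_mono) auto
  finally show ?case by simp
qed

lemma prod_std_normal_cdf_subset_le:
  "finite I \<Longrightarrow> J \<subseteq> I \<Longrightarrow> (\<Prod>j\<in>I. std_normal_cdf (c j)) \<le> (\<Prod>j\<in>J. std_normal_cdf (c j))"
  using prod.subset_diff[of J I "\<lambda>j. std_normal_cdf (c j)"]
  by (auto intro!: mult_left_le_one_le prod_nonneg prod_le_1 std_normal_cdf_nonneg std_normal_cdf_le_1)

text \<open>Coordinates with \<open>c i \<ge> t\<close> contribute at most \<open>\<phi>(t)\<close> each; for the others the Mills
  ratio bound reduces the sum to the one of \<open>sum_one_minus_mult_prod_le_1\<close>.\<close>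

lemma sum_deriv_prod_std_normal_cdf_le:
  fixes I :: "'a set" and c :: "'a \<Rightarrow> real"
  assumes fin: "finite I" and t: "0 \<le> t"
  shows "(\<Sum>i\<in>I. std_normal_density (c i) * (\<Prod>j\<in>I-{i}. std_normal_cdf (c j)))
           \<le> mills_bound t + card I * std_normal_density t"
proof -
  define A where "A = {i\<in>I. t \<le> c i}"
  define B where "B = {i\<in>I. c i < t}"
  have AB: "I = A \<union> B" "A \<inter> B = {}" "finite A" "finite B" using fin by (auto simp: A_def B_def)
  have "(\<Sum>i\<in>A. std_normal_density (c i) * (\<Prod>j\<in>I-{i}. std_normal_cdf (c j)))
        \<le> (\<Sum>i\<in>A. std_normal_density t)"
  proof (intro sum_mono)
    fix i assume "i \<in> A"
    then have "std_normal_density (c i) \<le> std_normal_density t"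
      using std_normal_density_antimono[OF t] by (auto simp: A_def)
    moreover have "(\<Prod>j\<in>I-{i}. std_normal_cdf (c j)) \<le> 1"
      using prod_std_normal_cdf_subset_le[of "I-{i}" "{}"] fin by simp
    ultimately show "std_normal_density (c i) * (\<Prod>j\<in>I-{i}. std_normal_cdf (c j)) \<le> std_normal_density t"
      by (metis mult_left_le order_trans normal_density_nonneg)
  qed
  also have "\<dots> \<le> card I * std_normal_density t"
    using card_mono[OF fin, of A] by (auto simp: A_def intro!: mult_right_mono)
  finally have sum_A: "(\<Sum>i\<in>A. std_normal_density (c i) * (\<Prod>j\<in>I-{i}. std_normal_cdf (c j)))
        \<le> card I * std_normal_density t" .
  have "(\<Sum>i\<in>B. std_normal_density (c i) * (\<Prod>j\<in>I-{i}. std_normal_cdf (c j)))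
      \<le> (\<Sum>i\<in>B. mills_bound t * ((1 - std_normal_cdf (c i)) * (\<Prod>j\<in>B-{i}. std_normal_cdf (c j))))"
  proof (intro sum_mono)
    fix i assume "i \<in> B"
    then have "std_normal_density (c i) \<le> mills_bound t * (1 - std_normal_cdf (c i))"
      using std_normal_density_le_mills_bound[OF t, of "c i"] by (auto simp: B_def)
    moreover have "(\<Prod>j\<in>I-{i}. std_normal_cdf (c j)) \<le> (\<Prod>j\<in>B-{i}. std_normal_cdf (c j))"
      using AB by (intro prod_std_normal_cdf_subset_le) auto
    ultimately show "std_normal_density (c i) * (\<Prod>j\<in>I-{i}. std_normal_cdf (c j))
        \<le> mills_bound t * ((1 - std_normal_cdf (c i)) * (\<Prod>j\<in>B-{i}. std_normal_cdf (c j)))"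
      unfolding mult.assoc[symmetric]
      using mills_bound_ge_1[OF t] std_normal_cdf_le_1[of "c i"]
      by (intro mult_mono prod_nonneg) (auto simp: std_normal_cdf_nonneg)
  qed
  also have "\<dots> \<le> mills_bound t"
    unfolding sum_distrib_left[symmetric]
    using sum_one_minus_mult_prod_le_1[of B "\<lambda>j. std_normal_cdf (c j)"] AB mills_bound_ge_1[OF t]
    by (intro mult_right_le_one_le) (auto simp: std_normal_cdf_nonneg std_normal_cdf_le_1
                                        intro!: sum_nonneg mult_nonneg_nonneg prod_nonneg)
  finally show ?thesis
    using sum_A AB by (simp add: sum.union_disjoint)
qed

lemma prod_std_normal_cdf_shift_le:
  fixes I :: "'a set" and c :: "'a \<Rightarrow> real"
  assumes fin: "finite I" and t: "0 \<le> t" and e: "0 \<le> e"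
  shows "(\<Prod>i\<in>I. std_normal_cdf (c i + e)) - (\<Prod>i\<in>I. std_normal_cdf (c i))
           \<le> (mills_bound t + card I * std_normal_density t) * e"
proof -
  define K where "K = mills_bound t + card I * std_normal_density t"
  define g where "g s = K * s - (\<Prod>i\<in>I. std_normal_cdf (c i + s))" for s
  have g_deriv: "DERIV g s :> K - (\<Sum>i\<in>I. std_normal_density (c i + s) * (\<Prod>j\<in>I-{i}. std_normal_cdf (c j + s)))"
    for s
  proof -
    have shift: "((\<lambda>u. c i + u) has_field_derivative 1) (at s)" for i
      by (auto intro!: derivative_eq_intros)
    have "((\<lambda>u. std_normal_cdf (c i + u)) has_field_derivative std_normal_density (c i + s)) (at s)" for i
      using DERIV_chain2[OF std_normal_cdf_has_field_derivative shift[of i]] by simp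
    then show ?thesis
      unfolding g_def by (auto intro!: derivative_eq_intros has_field_derivative_prod)
  qed
  have "g 0 \<le> g e"
  proof (rule DERIV_nonneg_imp_nondecreasing[OF e])
    fix s
    show "\<exists>y. DERIV g s :> y \<and> 0 \<le> y"
      using g_deriv[of s] sum_deriv_prod_std_normal_cdf_le[OF fin t, of "\<lambda>i. c i + s"]
      by (auto simp: K_def)
  qed
  then show ?thesis unfolding g_def K_def by simp
qed

lemma lower_orthant_iff_Basis:
  "x \<in> lower_orthant b \<longleftrightarrow> (\<forall>B\<in>(Basis :: (real^'n) set). x \<bullet> B \<le> b \<bullet> B)"
  unfolding lower_orthant_def Basis_vec_def by (auto simp: cart_eq_inner_axis)

lemma closed_lower_orthant: "closed (lower_orthant (b :: real^'n))"
  unfolding lower_orthant_def by (intro closed_Collect_all closed_Collect_le continuous_intros)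

lemma indicator_lower_orthant:
  "(indicator (lower_orthant b) x :: 'a :: comm_semiring_1)
     = (\<Prod>B\<in>(Basis :: (real^'n) set). indicator {..b \<bullet> B} (x \<bullet> B))"
proof (cases "x \<in> lower_orthant b")
  case True
  then show ?thesis by (auto simp: lower_orthant_iff_Basis intro!: prod.neutral)
next
  case False
  then obtain B :: "real^'n" where "B \<in> Basis" "\<not> x \<bullet> B \<le> b \<bullet> B"
    by (auto simp: lower_orthant_iff_Basis)
  then show ?thesis
    using False by (subst prod_zero) (auto intro!: bexI[of _ B])
qed

lemma gaussian_id_cov_density_eq_prod:
  fixes x mu :: "real^'n"
  shows "(2 * pi) powr (- real CARD('n) / 2) * exp (- (norm (x - mu))\<^sup>2 / 2)
       = (\<Prod>B\<in>Basis. normal_density (mu \<bullet> B) 1 (x \<bullet> B))"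
proof -
  define v where "v = x - mu"
  have "(\<Prod>B\<in>Basis. normal_density (mu \<bullet> B) 1 (x \<bullet> B))
      = (\<Prod>B\<in>(Basis :: (real^'n) set). exp (- (v \<bullet> B)\<^sup>2 / 2) / sqrt (2 * pi))"
    by (simp add: normal_density_def v_def inner_diff_left)
  also have "\<dots> = exp (\<Sum>B\<in>(Basis :: (real^'n) set). - (v \<bullet> B)\<^sup>2 / 2) / sqrt (2 * pi) ^ CARD('n)"
    using DIM_cart[where 'a=real and 'b='n] by (simp add: prod_dividef exp_sum)
  also have "(\<Sum>B\<in>(Basis :: (real^'n) set). - (v \<bullet> B)\<^sup>2 / 2) = - (\<Sum>B\<in>Basis. (v \<bullet> B)\<^sup>2) / 2"
    by (simp add: sum_negf sum_divide_distrib)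
  also have "(\<Sum>B\<in>Basis. (v \<bullet> B)\<^sup>2) = (norm v)\<^sup>2"
    unfolding power2_norm_eq_inner euclidean_inner[of v v] by (simp add: power2_eq_square)
  also have "sqrt (2 * pi) ^ CARD('n) = (2 * pi) powr (real CARD('n) / 2)"
    by (subst powr_half_sqrt_powr, simp, subst powr_realpow, simp) (rule real_sqrt_power[symmetric])
  finally show ?thesis
    by (simp add: v_def powr_minus_divide)
qed

lemma nn_integral_normal_density_atMost:
  "(\<integral>\<^sup>+y. ennreal (normal_density m 1 y) * indicator {..b} y \<partial>lborel) = ennreal (std_normal_cdf (b - m))"
proof -
  have "(\<integral>\<^sup>+y. ennreal (normal_density m 1 y) * indicator {..b} y \<partial>lborel)
     = (\<integral>\<^sup>+y. ennreal (normal_density m 1 (m + y)) * indicator {..b} (m + y) \<partial>lborel)"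
    using nn_integral_real_affine[of "\<lambda>y. ennreal (normal_density m 1 y) * indicator {..b} y" 1 m] by simp
  also have "\<dots> = (\<integral>\<^sup>+y. ennreal (std_normal_density y) * indicator {..b - m} y \<partial>lborel)"
    by (intro nn_integral_cong) (auto simp: normal_density_def split: split_indicator)
  finally show ?thesis by (simp add: nn_integral_std_normal_density_atMost)
qed

text \<open>The coordinates of \<open>gaussian_id_cov mu\<close> are independent with laws \<open>N(mu \<bullet> B, 1)\<close>.\<close>

lemma measure_gaussian_id_cov_lower_orthant:
  fixes mu b :: "real^'n"
  shows "measure (gaussian_id_cov mu) (lower_orthant b) = (\<Prod>B\<in>Basis. std_normal_cdf (b \<bullet> B - mu \<bullet> B))"
proof -
  have "emeasure (gaussian_id_cov mu) (lower_orthant b)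
      = (\<integral>\<^sup>+x. (\<Prod>B\<in>Basis. ennreal (normal_density (mu \<bullet> B) 1 (x \<bullet> B)) * indicator {..b \<bullet> B} (x \<bullet> B)) \<partial>lborel)"
    unfolding gaussian_id_cov_def gaussian_id_cov_density_eq_prod
    by (subst emeasure_density)
       (auto intro!: nn_integral_cong borel_closed closed_lower_orthant
             simp: prod.distrib prod_ennreal indicator_lower_orthant)
  also have "\<dots> = (\<Prod>B\<in>Basis. ennreal (std_normal_cdf (b \<bullet> B - mu \<bullet> B)))"
    by (subst nn_integral_lborel_prod) (auto simp: nn_integral_normal_density_atMost)
  finally show ?thesis
    unfolding measure_def by (simp add: prod_ennreal prod_nonneg std_normal_cdf_nonneg)
qed

lemma gaussian_id_cov_lower_orthant_shift_le:
  fixes mu b :: "real^'n"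
  assumes "0 \<le> t" and "0 \<le> e"
  shows "measure (gaussian_id_cov mu) (lower_orthant (\<chi> i. b $ i + e))
           \<le> measure (gaussian_id_cov mu) (lower_orthant b) + (mills_bound t + CARD('n) * std_normal_density t) * e"
proof -
  have "(\<chi> i. b $ i + e) \<bullet> B = b \<bullet> B + e" if "B \<in> Basis" for B :: "real^'n"
    using that by (auto simp: Basis_vec_def cart_eq_inner_axis[symmetric])
  then have "(\<Prod>B\<in>Basis. std_normal_cdf ((\<chi> i. b $ i + e) \<bullet> B - mu \<bullet> B))
           = (\<Prod>B\<in>Basis. std_normal_cdf ((b \<bullet> B - mu \<bullet> B) + e))"
    by (intro prod.cong) (auto simp: algebra_simps)
  moreover have "card (Basis :: (real^'n) set) = CARD('n)"
    using DIM_cart[where 'a=real and 'b='n] by simp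
  ultimately show ?thesis
    using prod_std_normal_cdf_shift_le[of Basis t e "\<lambda>B. b \<bullet> B - mu \<bullet> B"] assms
    unfolding measure_gaussian_id_cov_lower_orthant by simp
qed

lemma ln_5_ge: "8/5 \<le> ln (5::real)"
proof -
  have "exp (8/5 :: real) ^ 5 = exp 1 ^ 8"
    by (simp flip: exp_of_nat_mult)
  also have "\<dots> \<le> (272/100) ^ 8"
    using e_less_272 by (intro power_mono) auto
  also have "\<dots> \<le> (5::real) ^ 5" by (simp add: power_divide divide_le_eq)
  finally have "exp (8/5 :: real) \<le> 5"
    using power_mono_iff[of "exp (8/5) :: real" 5 5] by simp
  then show ?thesis by (subst ln_ge_iff) auto
qed

lemma inverse_sqrt_2pi_le: "1 / sqrt (2 * pi) \<le> 2/5"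
proof -
  have "5/2 \<le> sqrt (2 * pi)"
    using pi_approx by (intro real_le_rsqrt) (simp add: power2_eq_square)
  then show ?thesis by (simp add: field_simps)
qed

lemma mills_bound_plus_std_normal_density_le_large:
  assumes "4 \<le> d"
  shows "mills_bound (sqrt (2 * ln (real d + 1))) + real d * std_normal_density (sqrt (2 * ln (real d + 1)))
           \<le> 9/4 * sqrt (ln (real d + 1))"
proof -
  define r where "r = sqrt (ln (real d + 1))"
  define t where "t = sqrt (2 * ln (real d + 1))"
  have "ln 5 \<le> ln (real d + 1)" using assms by simp
  then have "8/5 \<le> ln (real d + 1)" using ln_5_ge by linarith
  then have r: "126/100 \<le> r"
    unfolding r_def by (intro real_le_rsqrt) (simp add: power2_eq_square)
  have sqrt2: "14/10 \<le> sqrt (2::real)" "sqrt (2::real) \<le> 14143/10000"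
    by (rule real_le_rsqrt, simp add: power2_eq_square) (rule real_le_lsqrt, auto simp: power2_eq_square)
  have t: "t = sqrt 2 * r" unfolding t_def r_def by (simp add: real_sqrt_mult)
  then have "0 < t" using r sqrt2 by simp
  \<comment> \<open>\<open>t\<close> is chosen so that \<open>exp (- t\<^sup>2 / 2) = 1 / (d + 1)\<close>.\<close>
  have "real d * std_normal_density t = real d / (real d + 1) * (1 / sqrt (2 * pi))"
    unfolding std_normal_density_def t_def by (simp add: exp_minus field_simps)
  also have "\<dots> \<le> 1 * (2/5)"
    using inverse_sqrt_2pi_le by (intro mult_mono) auto
  finally have density: "real d * std_normal_density t \<le> 2/5" by simp
  have "1 / t \<le> 1 / ((14/10) * (126/100))"
    unfolding t using sqrt2 r by (intro divide_left_mono mult_mono) auto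
  also have "\<dots> \<le> 57/100" by simp
  finally have "1 / t \<le> 57/100" .
  moreover have "t \<le> 14143/10000 * r"
    unfolding t using sqrt2 r by (intro mult_right_mono) auto
  ultimately have "mills_bound t \<le> 14143/10000 * r + 57/100"
    using mills_bound_le[OF \<open>0 < t\<close>] by linarith
  then show ?thesis
    using density r unfolding t_def[symmetric] r_def[symmetric] by simp
qed

lemma gaussian_anti_concentration_constant:
  assumes "1 \<le> d"
  obtains t where "0 \<le> t" "mills_bound t + real d * std_normal_density t \<le> 9/4 * sqrt (ln (real d + 1))"
proof (cases "d \<le> 3")
  case True
  have "mills_bound 0 + real d * std_normal_density 0 \<le> 1 + real d * (2/5)"
    using mult_left_mono[OF inverse_sqrt_2pi_le, of "real d"]
    by (simp add: mills_bound_0 std_normal_density_0)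
  also have "\<dots> \<le> 9/4 * sqrt (ln (real d + 1))"
  proof -
    have "d = 1 \<or> d = 2 \<or> d = 3" using assms True by auto
    moreover have "ln (2::real) \<le> ln 3" "ln (4::real) = 2 * ln 2"
      using ln_realpow[of 2 2] by auto
    then have "2/3 \<le> ln (3::real)" "4/3 \<le> ln (4::real)"
      using ln2_ge_two_thirds by linarith+
    ultimately have "(4/9 * (1 + real d * (2/5)))\<^sup>2 \<le> ln (real d + 1)"
      using ln2_ge_two_thirds by (auto simp: power2_eq_square)
    then show ?thesis using real_le_rsqrt by fastforce
  qed
  finally show ?thesis using that[of 0] by simp
next
  case False
  then have "4 \<le> d" by simp
  show ?thesis
    by (rule that[OF _ mills_bound_plus_std_normal_density_le_large[OF \<open>4 \<le> d\<close>]]) simp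
qed

lemma lower_orthant_shift:
  fixes x y a :: "real^'n"
  assumes "x \<in> lower_orthant a" and "norm (x - y) \<le> e"
  shows "y \<in> lower_orthant (\<chi> i. a $ i + e)"
proof -
  have "y $ i \<le> a $ i + e" for i
  proof -
    have "x $ i \<le> a $ i" "\<bar>x $ i - y $ i\<bar> \<le> e"
      using assms component_le_norm_cart[of "x - y" i] by (auto simp: lower_orthant_def)
    then show ?thesis by linarith
  qed
  then show ?thesis by (simp add: lower_orthant_def)
qed

lemma (in prob_space) prob_greater_le_nn_integral_div:
  assumes "{x \<in> space M. e < f x} \<in> events" and "0 < e" and "0 \<le> w"
    and "(\<integral>\<^sup>+ x. ennreal (f x) \<partial>M) \<le> ennreal w"
  shows "prob {x \<in> space M. e < f x} \<le> w / e"
proof -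
  have "ennreal (e * prob {x \<in> space M. e < f x}) = (\<integral>\<^sup>+ x. ennreal e * indicator {x \<in> space M. e < f x} x \<partial>M)"
    using assms(1,2) by (simp add: nn_integral_cmult_indicator emeasure_eq_measure ennreal_mult)
  also have "\<dots> \<le> (\<integral>\<^sup>+ x. ennreal (f x) \<partial>M)"
    by (intro nn_integral_mono) (auto split: split_indicator intro: ennreal_leI)
  finally have "ennreal (e * prob {x \<in> space M. e < f x}) \<le> ennreal w"
    using assms(4) by (rule order_trans)
  then have "e * prob {x \<in> space M. e < f x} \<le> w"
    using assms(3) by (simp add: ennreal_le_iff)
  then show ?thesis using assms(2) by (simp add: field_simps)
qed

lemma coupling_lower_orthant_le:
  fixes P Q :: "(real^'n) measure"
  assumes C: "C \<in> couplings P Q" and e: "0 < e" and "0 \<le> w"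
    and cost: "(\<integral>\<^sup>+ z. ennreal (norm (fst z - snd z)) \<partial>C) \<le> ennreal w"
  shows "measure P (lower_orthant a) \<le> measure Q (lower_orthant (\<chi> i. a $ i + e)) + w / e"
    and "measure Q (lower_orthant (\<chi> i. a $ i - e)) \<le> measure P (lower_orthant a) + w / e"
proof -
  interpret C: prob_space C using C by (simp add: couplings_def)
  have sets_C: "sets C = sets borel" and P: "P = distr C borel fst" and Q: "Q = distr C borel snd"
    using C by (auto simp: couplings_def)
  have meas: "fst \<in> borel_measurable C" "snd \<in> borel_measurable C"
    unfolding measurable_cong_sets[OF sets_C refl]
    by (auto intro!: borel_measurable_continuous_onI continuous_intros)
  have "{z. f z \<in> lower_orthant b} \<in> sets C" if "f \<in> borel_measurable C" for f and b :: "real^'n"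
    using measurable_sets[OF that borel_closed[OF closed_lower_orthant[of b]]]
    by (simp add: vimage_def sets_eq_imp_space_eq[OF sets_C])
  note sets = this[OF meas(1)] this[OF meas(2)]
  have P_eq: "measure P (lower_orthant b) = C.prob {z. fst z \<in> lower_orthant b}" for b
    unfolding P using meas(1)
    by (subst measure_distr) (auto simp: vimage_def sets_eq_imp_space_eq[OF sets_C]
                                   intro: borel_closed closed_lower_orthant)
  have Q_eq: "measure Q (lower_orthant b) = C.prob {z. snd z \<in> lower_orthant b}" for b
    unfolding Q using meas(2)
    by (subst measure_distr) (auto simp: vimage_def sets_eq_imp_space_eq[OF sets_C]
                                   intro: borel_closed closed_lower_orthant)
  define D where "D = {z :: (real^'n) \<times> (real^'n). e < norm (fst z - snd z)}"
  have D: "D \<in> sets C"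
    unfolding D_def sets_C by (rule borel_open) (auto intro!: open_Collect_less continuous_intros)
  have D_le: "C.prob D \<le> w / e"
    using C.prob_greater_le_nn_integral_div[of e "\<lambda>z. norm (fst z - snd z)", OF _ e \<open>0 \<le> w\<close> cost] D
    by (simp add: D_def sets_eq_imp_space_eq[OF sets_C])
  have "{z. fst z \<in> lower_orthant a} \<subseteq> {z. snd z \<in> lower_orthant (\<chi> i. a $ i + e)} \<union> D"
    using lower_orthant_shift by (force simp: D_def)
  then have "C.prob {z. fst z \<in> lower_orthant a}
               \<le> C.prob {z. snd z \<in> lower_orthant (\<chi> i. a $ i + e)} + C.prob D"
    using sets D by (intro order_trans[OF C.finite_measure_mono measure_Un_le]) auto
  then show "measure P (lower_orthant a) \<le> measure Q (lower_orthant (\<chi> i. a $ i + e)) + w / e"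
    using D_le by (simp add: P_eq Q_eq)
  have "(\<chi> i. (\<chi> j. a $ j - e) $ i + e) = a" by (simp add: vec_eq_iff)
  then have "{z. snd z \<in> lower_orthant (\<chi> i. a $ i - e)} \<subseteq> {z. fst z \<in> lower_orthant a} \<union> D"
    using lower_orthant_shift[of "snd _" "\<chi> i. a $ i - e" "fst _" e]
    by (force simp: D_def norm_minus_commute)
  then have "C.prob {z. snd z \<in> lower_orthant (\<chi> i. a $ i - e)}
               \<le> C.prob {z. fst z \<in> lower_orthant a} + C.prob D"
    using sets D by (intro order_trans[OF C.finite_measure_mono measure_Un_le]) auto
  then show "measure Q (lower_orthant (\<chi> i. a $ i - e)) \<le> measure P (lower_orthant a) + w / e"
    using D_le by (simp add: P_eq Q_eq)
qed

lemma kolmogorov_dist_le_smoothing: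
  fixes P Q :: "(real^'n) measure"
  assumes shift: "\<And>b. measure Q (lower_orthant (\<chi> i. b $ i + e)) \<le> measure Q (lower_orthant b) + K * e"
    and W: "wasserstein1 P Q < \<infinity>" and e: "0 < e"
  shows "kolmogorov_dist P Q \<le> K * e + enn2real (wasserstein1 P Q) / e"
  unfolding kolmogorov_dist_def
proof (rule cSUP_least)
  fix a :: "real^'n"
  define w where "w = enn2real (wasserstein1 P Q)"
  show "\<bar>measure P (lower_orthant a) - measure Q (lower_orthant a)\<bar> \<le> K * e + w / e"
  proof (rule field_le_epsilon)
    fix \<delta> :: real assume "0 < \<delta>"
    then have "wasserstein1 P Q < ennreal (w + \<delta> * e)"
      using W e by (cases "wasserstein1 P Q") (auto simp: w_def ennreal_less_iff)
    then obtain C where C: "C \<in> couplings P Q"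
      and cost: "(\<integral>\<^sup>+ z. ennreal (norm (fst z - snd z)) \<partial>C) \<le> ennreal (w + \<delta> * e)"
      unfolding wasserstein1_def by (auto simp: INF_less_iff less_imp_le)
    have "0 \<le> w + \<delta> * e" using \<open>0 < \<delta>\<close> e by (simp add: w_def)
    note coupling = coupling_lower_orthant_le[OF C e this cost]
    have "(\<chi> i. (\<chi> j. a $ j - e) $ i + e) = a" by (simp add: vec_eq_iff)
    then have "measure Q (lower_orthant a) \<le> measure Q (lower_orthant (\<chi> i. a $ i - e)) + K * e"
      using shift[of "\<chi> j. a $ j - e"] by simp
    moreover have "(w + \<delta> * e) / e = w / e + \<delta>" using e by (simp add: field_simps)
    ultimately show "\<bar>measure P (lower_orthant a) - measure Q (lower_orthant a)\<bar> \<le> K * e + w / e + \<delta>"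
      using coupling(1)[of a] coupling(2)[of a] shift[of a] by (simp add: abs_le_iff)
  qed
qed simp

lemma le_two_sqrt_mult_if_le_tradeoff:
  fixes D K w :: real
  assumes le: "\<And>e. 0 < e \<Longrightarrow> D \<le> K * e + w / e" and "0 < K" and "0 \<le> w"
  shows "D \<le> 2 * sqrt (K * w)"
proof (cases "w = 0")
  case True
  have "D \<le> 0 + \<delta>" if "0 < \<delta>" for \<delta>
    using le[of "\<delta> / K"] that \<open>0 < K\<close> True by simp
  then show ?thesis using True by (simp add: field_le_epsilon)
next
  case False
  \<comment> \<open>The optimal choice balances the two terms.\<close>
  define e where "e = sqrt (w / K)"
  have "0 < e" using False \<open>0 \<le> w\<close> \<open>0 < K\<close> by (simp add: e_def)
  have "K * e = sqrt (K * w)"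
    using \<open>0 < K\<close> by (simp add: e_def real_sqrt_divide real_sqrt_mult field_simps)
  moreover have "e * e = w / K"
    using \<open>0 \<le> w\<close> \<open>0 < K\<close> by (simp add: e_def)
  then have "w / e = K * e"
    using \<open>0 < e\<close> \<open>0 < K\<close> by (simp add: field_simps)
  ultimately show ?thesis using le[of e] \<open>0 < e\<close> by simp
qed

theorem theorem3p3:
  fixes M :: "'a measure" and N :: "'b measure"
    and X :: "'a \<Rightarrow> real^'n" and G :: "'b \<Rightarrow> real^'n" and mu :: "real^'n"
  assumes "prob_space M" and "X \<in> borel_measurable M"
    and "prob_space N" and "G \<in> borel_measurable N"
    and "distr N borel G = gaussian_id_cov mu"
    and "wasserstein1 (distr M borel X) (distr N borel G) < \<infinity>"
  shows "kolmogorov_dist (distr M borel X) (distr N borel G)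
           \<le> 3 * (ln (real CARD('n) + 1)) powr (1/4)
               * sqrt (enn2real (wasserstein1 (distr M borel X) (distr N borel G)))"
proof -
  define L where "L = ln (real CARD('n) + 1)"
  define K where "K = 9/4 * sqrt L"
  define w where "w = enn2real (wasserstein1 (distr M borel X) (distr N borel G))"
  have "0 < L" by (simp add: L_def)
  obtain t where "0 \<le> t" and t: "mills_bound t + CARD('n) * std_normal_density t \<le> K"
    using gaussian_anti_concentration_constant[of "CARD('n)"] by (auto simp: K_def L_def Suc_le_eq)
  have shift: "measure (distr N borel G) (lower_orthant (\<chi> i. b $ i + e))
                 \<le> measure (distr N borel G) (lower_orthant b) + K * e" if "0 < e" for b e
    using gaussian_id_cov_lower_orthant_shift_le[OF \<open>0 \<le> t\<close> less_imp_le[OF that], of mu b]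
          mult_right_mono[OF t less_imp_le[OF that]]
    unfolding assms(5) by linarith
  have "kolmogorov_dist (distr M borel X) (distr N borel G) \<le> K * e + w / e" if "0 < e" for e
    unfolding w_def by (rule kolmogorov_dist_le_smoothing[OF shift[OF that] assms(6) that])
  then have "kolmogorov_dist (distr M borel X) (distr N borel G) \<le> 2 * sqrt (K * w)"
    using \<open>0 < L\<close> by (intro le_two_sqrt_mult_if_le_tradeoff) (auto simp: w_def K_def)
  also have "2 * sqrt (K * w) = 3 * L powr (1/4) * sqrt w"
    using \<open>0 < L\<close>
    by (simp add: K_def real_sqrt_mult real_sqrt_divide powr_half_sqrt[symmetric] powr_powr)
  finally show ?thesis by (simp add: L_def w_def)
qed
end
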